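(* Let $Q\succeq0$, $q\in\mathbb{R}^n$, $A\succ0$, $v\in\mathbb{R}^n$, and let $m>0$ satisfy Requirement 1 (see context). For $k\in\mathbb{N}$ let $x_k^\star$ be the unique minimizer of $J_k$ over $\mathbb{R}^n$. Then: (1) $x_k^\star\in\mathcal{C}$ for every $k\in\mathbb{N}$; (2) $x_k^\star\to x^\star$ as $k\to\infty$, where $x^\star=\arg\min_{x\in\mathcal{X}^\star}g(x)$ is the (unique) minimizer of $g$ over the solution set $\mathcal{X}^\star$ of the constrained problem; in particular $x^\star\in\mathcal{X}^\star$.
   Context: $Q\in\mathbb{R}^{n\times n}$ symmetric positive semidefinite, $A\in\mathbb{R}^{n\times n}$ symmetric positive definite. $f(x)=\tfrac12 x^\top Qx+q^\top x$, $g(x)=(x-v)^\top A(x-v)$, $\mathcal{C}=\{x: g(x)\le1\}$, $\partial\mathcal{C}=\{x:g(x)=1\}$. The constrained problem is $\min_{x\in\mathcal{C}} f(x)$ with (nonempty, compact, convex) solution set $\mathcal{X}^\star=\arg\min_{x\in\mathcal{C}}f(x)$. For $k\in\mathbb{N}=\{1,2,\dots\}$: $p_k(x)=\frac{m}{k}g(x)^k$, $J_k(x)=f(x)+p_k(x)$. Requirement 1: $m\ge m_{\min}:=\max(\hat m_{\min},0)$, where $\hat m_{\min}=\max_{x:\,g(x)=1}\; -\frac{\langle\nabla g(x),\nabla f(x)\rangle}{\langle\nabla g(x),\nabla g(x)\rangle}$; equivalently $m\ge0$ and $\langle \nabla g(x),\nabla f(x)+m\nabla g(x)\rangle\ge0$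 for all $x$ with $g(x)=1$. *)

theory Defs
  imports "HOL-Analysis.Analysis"
begin

definition sym_psd :: "real^'n^'n \<Rightarrow> bool" where
  "sym_psd M \<longleftrightarrow> transpose M = M \<and> (\<forall>x. 0 \<le> x \<bullet> (M *v x))"

definition sym_pd :: "real^'n^'n \<Rightarrow> bool" where
  "sym_pd M \<longleftrightarrow> transpose M = M \<and> (\<forall>x. x \<noteq> 0 \<longrightarrow> 0 < x \<bullet> (M *v x))"

definition fobj :: "real^'n^'n \<Rightarrow> real^'n \<Rightarrow> real^'n \<Rightarrow> real" where
  "fobj Q q x = (1/2) * (x \<bullet> (Q *v x)) + q \<bullet> x"

definition gcon :: "real^'n^'n \<Rightarrow> real^'n \<Rightarrow> real^'n \<Rightarrow> real" where
  "gcon A v x = (x - v) \<bullet> (A *v (x - v))"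

text \<open>Gradients (Q, A symmetric): grad f(x) = Q x + q, grad g(x) = 2 A (x - v)\<close>
definition grad_f :: "real^'n^'n \<Rightarrow> real^'n \<Rightarrow> real^'n \<Rightarrow> real^'n" where
  "grad_f Q q x = Q *v x + q"

definition grad_g :: "real^'n^'n \<Rightarrow> real^'n \<Rightarrow> real^'n \<Rightarrow> real^'n" where
  "grad_g A v x = 2 *\<^sub>R (A *v (x - v))"

definition Cset :: "real^'n^'n \<Rightarrow> real^'n \<Rightarrow> (real^'n) set" where
  "Cset A v = {x. gcon A v x \<le> 1}"

definition Xstar :: "real^'n^'n \<Rightarrow> real^'n \<Rightarrow> real^'n^'n \<Rightarrow> real^'n \<Rightarrow> (real^'n) set" where
  "Xstar Q q A v = {x \<in> Cset A v. \<forall>y \<in> Cset A v. fobj Q q x \<le> fobj Q q y}"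

definition Jk :: "real^'n^'n \<Rightarrow> real^'n \<Rightarrow> real^'n^'n \<Rightarrow> real^'n \<Rightarrow> real \<Rightarrow> nat \<Rightarrow> real^'n \<Rightarrow> real" where
  "Jk Q q A v m k x = fobj Q q x + (m / real k) * (gcon A v x) ^ k"

text \<open>Requirement 1 (equivalent pointwise form):
  m \<ge> 0 and <grad g x, grad f x + m grad g x> \<ge> 0 whenever g x = 1.\<close>
definition requirement1 :: "real^'n^'n \<Rightarrow> real^'n \<Rightarrow> real^'n^'n \<Rightarrow> real^'n \<Rightarrow> real \<Rightarrow> bool" where
  "requirement1 Q q A v m \<longleftrightarrow> 0 \<le> m \<and>
     (\<forall>x. gcon A v x = 1 \<longrightarrow>
        0 \<le> grad_g A v x \<bullet> (grad_f Q q x + m *\<^sub>R grad_g A v x))"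

end

theory Submission
  imports Defs
begin

text \<open>
  \<open>J\<^sub>k = f + (m/k) g\<^sup>k\<close> is strictly convex: f is convex, g is strictly convex and
  nonnegative, and \<open>u \<mapsto> u\<^sup>k\<close> is convex and nondecreasing on \<open>[0, \<infinity>)\<close>. Hence its
  minimiser \<open>x\<^sub>k\<close> is unique. To see \<open>x\<^sub>k \<in> C\<close>, let y minimise \<open>J\<^sub>k\<close> over the compact
  ellipsoid C. If \<open>x\<^sub>k \<notin> C\<close>, then \<open>J\<^sub>k x\<^sub>k < J\<^sub>k y\<close>, so \<open>\<nabla>J\<^sub>k(y) \<bullet> (x\<^sub>k - y) < 0\<close>.
  At an interior y this direction is feasible; at a boundary y Requirement 1 says
  \<open>\<nabla>g(y) \<bullet> \<nabla>J\<^sub>k(y) \<ge> 0\<close>, so subtracting a multiple of \<open>\<nabla>g(y)\<close> yields a descent direction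
  pointing into C. Either way \<open>J\<^sub>k\<close> decreases inside C near y, a contradiction.

  Let \<open>x\<^sup>*\<close> be the minimiser of g over \<open>X\<^sup>*\<close> (unique by strict convexity of g) and \<open>f\<^sup>*\<close> the
  optimal value. Comparing \<open>J\<^sub>k x\<^sub>k \<le> J\<^sub>k x\<^sup>*\<close> gives \<open>g x\<^sub>k \<le> g x\<^sup>*\<close> and
  \<open>f x\<^sub>k \<le> f\<^sup>* + m/k\<close>, so the continuous function \<open>max (f - f\<^sup>*) (g - g x\<^sup>*)\<close> is at most
  \<open>m/k\<close> along the sequence. On C it is positive except at \<open>x\<^sup>*\<close>, and compactness of C
  forces \<open>x\<^sub>k \<longrightarrow> x\<^sup>*\<close>.
\<close>

lemma power_above_tangent:
  fixes u u0 :: real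
  assumes "0 \<le> u" and "0 \<le> u0"
  shows "u0 ^ k + real k * u0 ^ (k - 1) * (u - u0) \<le> u ^ k"
proof (cases "u0 = 0")
  case True
  then show ?thesis
    using assms(1) by (cases k) (auto simp: power_0_left)
next
  case False
  define t where "t = u / u0"
  have u: "u = u0 * t"
    using False by (simp add: t_def)
  have "1 + real k * (t - 1) \<le> (1 + (t - 1)) ^ k"
    using assms by (intro Bernoulli_inequality) (simp add: t_def)
  then have "u0 ^ k * (1 + real k * (t - 1)) \<le> u0 ^ k * t ^ k"
    using assms by (intro mult_left_mono) auto
  then show ?thesis
    unfolding u by (cases k) (simp_all add: power_mult_distrib algebra_simps)
qed

lemma power_midpoint_le:
  fixes a b :: real
  assumes "0 \<le> a" and "0 \<le> b"
  shows "((a + b) / 2) ^ k \<le> (a ^ k + b ^ k) / 2"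
proof -
  define c where "c = (a + b) / 2"
  define t where "t = real k * c ^ (k - 1)"
  have tangents: "c ^ k + t * (a - c) \<le> a ^ k" "c ^ k + t * (b - c) \<le> b ^ k"
    unfolding t_def c_def using assms by (intro power_above_tangent; simp)+
  have "t * (a - c) + t * (b - c) = 0"
    by (simp add: c_def field_simps)
  then have "2 * c ^ k \<le> a ^ k + b ^ k"
    using add_mono[OF tangents] by simp
  then show ?thesis
    by (simp add: c_def)
qed

lemma argmin_unique_of_strict_midpoint_convex:
  fixes \<phi> :: "'a::real_vector \<Rightarrow> real"
  assumes "\<And>x y. x \<in> S \<Longrightarrow> y \<in> S \<Longrightarrow> midpoint x y \<in> S"
    and "\<And>x y. x \<in> S \<Longrightarrow> y \<in> S \<Longrightarrow> x \<noteq> y \<Longrightarrow> \<phi> (midpoint x y) < (\<phi> x + \<phi> y) / 2"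
    and "x \<in> S" "\<forall>z\<in>S. \<phi> x \<le> \<phi> z"
    and "y \<in> S" "\<forall>z\<in>S. \<phi> y \<le> \<phi> z"
  shows "x = y"
proof (rule ccontr)
  assume "x \<noteq> y"
  then have "\<phi> (midpoint x y) < (\<phi> x + \<phi> y) / 2"
    using assms(2,3,5) by blast
  moreover have "\<phi> x \<le> \<phi> (midpoint x y)" "\<phi> x \<le> \<phi> y" "\<phi> y \<le> \<phi> x"
    using assms by auto
  ultimately show False
    by simp
qed

lemma DERIV_neg_imp_eventually_less:
  fixes \<phi> :: "real \<Rightarrow> real"
  assumes "(\<phi> has_real_derivative D) (at x)" and "D < 0"
  shows "\<forall>\<^sub>F s in at_right x. \<phi> s < \<phi> x"
proof -
  obtain e where "e > 0" and e: "\<And>h. 0 < h \<Longrightarrow> h < e \<Longrightarrow> \<phi> (x + h) < \<phi> x"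
    using DERIV_neg_dec_right[OF assms] by blast
  have "\<forall>\<^sub>F s in at_right x. s \<in> {x<..<x + e}"
    using \<open>e > 0\<close> by (intro eventually_at_right_real) simp
  then show ?thesis
    by (rule eventually_mono) (use e[of "_ - x"] in auto)
qed

lemma tendsto_unique_nonpos_point:
  fixes \<phi> :: "'a::metric_space \<Rightarrow> real"
  assumes "compact K" and "continuous_on K \<phi>"
    and unique: "\<And>x. x \<in> K \<Longrightarrow> \<phi> x \<le> 0 \<Longrightarrow> x = a"
    and in_K: "\<forall>\<^sub>F n in F. X n \<in> K"
    and small: "\<And>e. e > 0 \<Longrightarrow> \<forall>\<^sub>F n in F. \<phi> (X n) < e"
  shows "(X \<longlongrightarrow> a) F"
proof (rule tendstoI)
  fix e :: real
  assume "e > 0"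
  let ?K = "K \<inter> {x. e \<le> dist x a}"
  show "\<forall>\<^sub>F n in F. dist (X n) a < e"
  proof (cases "?K = {}")
    case True
    show ?thesis
      using in_K by (rule eventually_mono) (use True in \<open>auto simp flip: not_le\<close>)
  next
    case False
    have "compact ?K"
      using assms(1) by (intro compact_Int_closed closed_Collect_le continuous_intros)
    then obtain x where x: "x \<in> ?K" "\<And>y. y \<in> ?K \<Longrightarrow> \<phi> x \<le> \<phi> y"
      using continuous_attains_inf[OF _ False continuous_on_subset[OF assms(2)]] by blast
    have "\<phi> x > 0"
      using unique[of x] x(1) \<open>e > 0\<close> by force
    with small have "\<forall>\<^sub>F n in F. \<phi> (X n) < \<phi> x" .
    with in_K show ?thesis
      by eventually_elim (use x(2) in force)
  qed
qed

lemma symmetric_matrix_inner_commute: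
  fixes M :: "real^'n^'n"
  assumes "transpose M = M"
  shows "x \<bullet> (M *v y) = y \<bullet> (M *v x)"
  by (metis assms dot_lmul_matrix inner_commute vector_transpose_matrix)

lemma quadratic_form_expand:
  fixes M :: "real^'n^'n"
  assumes "transpose M = M"
  shows "a \<bullet> (M *v a) = b \<bullet> (M *v b) + (2 *\<^sub>R (M *v b)) \<bullet> (a - b) + (a - b) \<bullet> (M *v (a - b))"
  using symmetric_matrix_inner_commute[OF assms, of a b]
  by (simp add: matrix_vector_mult_diff_distrib inner_diff_left inner_diff_right inner_commute algebra_simps)

lemma sym_pd_imp_sym_psd: "sym_pd A \<Longrightarrow> sym_psd A"
  unfolding sym_pd_def sym_psd_def by (metis inner_zero_left order.strict_implies_order order_refl)

lemma sym_pd_quadratic_form_ge: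
  fixes A :: "real^'n^'n"
  assumes "sym_pd A"
  obtains c where "c > 0" "\<And>x. c * (norm x)\<^sup>2 \<le> x \<bullet> (A *v x)"
proof -
  let ?h = "\<lambda>x::real^'n. x \<bullet> (A *v x)"
  have "sphere (0::real^'n) 1 \<noteq> {}" "continuous_on (sphere 0 1) ?h"
    by (simp, intro continuous_intros)
  then obtain x0 where x0: "x0 \<in> sphere 0 1" "\<And>y. y \<in> sphere 0 1 \<Longrightarrow> ?h x0 \<le> ?h y"
    using continuous_attains_inf[of "sphere 0 1" ?h] by auto
  have "?h x0 * (norm x)\<^sup>2 \<le> ?h x" for x
  proof (cases "x = 0")
    case False
    then have "?h x0 \<le> ?h (x /\<^sub>R norm x)"
      by (intro x0(2)) simp
    also have "\<dots> = ?h x / (norm x)\<^sup>2"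
      by (simp add: matrix_vector_mult_scaleR power2_eq_square divide_inverse)
    finally show ?thesis
      using False by (simp add: field_simps)
  qed simp
  moreover have "x0 \<noteq> 0"
    using x0(1) by auto
  then have "0 < ?h x0"
    using assms unfolding sym_pd_def by blast
  ultimately show ?thesis
    using that by blast
qed

lemma fobj_expand:
  assumes "transpose Q = Q"
  shows "fobj Q q x = fobj Q q y + grad_f Q q y \<bullet> (x - y) + (1/2) * ((x - y) \<bullet> (Q *v (x - y)))"
  using quadratic_form_expand[OF assms, of x y]
  unfolding fobj_def grad_f_def by (simp add: inner_add_left inner_diff_right algebra_simps inner_commute)

lemma gcon_expand:
  assumes "transpose A = A"
  shows "gcon A v x = gcon A v y + grad_g A v y \<bullet> (x - y) + (x - y) \<bullet> (A *v (x - y))"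
  using quadratic_form_expand[OF assms, of "x - v" "y - v"]
  unfolding gcon_def grad_g_def by simp

lemma gcon_nonneg: "sym_psd A \<Longrightarrow> 0 \<le> gcon A v x"
  unfolding sym_psd_def gcon_def by blast

lemma fobj_midpoint_le:
  assumes "sym_psd Q"
  shows "fobj Q q (midpoint x y) \<le> (fobj Q q x + fobj Q q y) / 2"
proof -
  let ?d = "(x - y) /\<^sub>R 2"
  have "x - midpoint x y = ?d" "y - midpoint x y = - ?d"
    by (simp_all add: midpoint_def vec_eq_iff field_simps)
  moreover have "0 \<le> ?d \<bullet> (Q *v ?d)"
    using assms unfolding sym_psd_def by blast
  ultimately show ?thesis
    using fobj_expand[of Q q x "midpoint x y"] fobj_expand[of Q q y "midpoint x y"] assms
    unfolding sym_psd_def by (simp add: matrix_vector_mult_scaleR vec.neg)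
qed

lemma gcon_midpoint_less:
  assumes "sym_pd A" and "x \<noteq> y"
  shows "gcon A v (midpoint x y) < (gcon A v x + gcon A v y) / 2"
proof -
  let ?d = "(x - y) /\<^sub>R 2"
  have "x - midpoint x y = ?d" "y - midpoint x y = - ?d"
    by (simp_all add: midpoint_def vec_eq_iff field_simps)
  moreover have "?d \<noteq> 0"
    using assms(2) by simp
  then have "0 < ?d \<bullet> (A *v ?d)"
    using assms(1) unfolding sym_pd_def by blast
  ultimately show ?thesis
    using gcon_expand[of A v x "midpoint x y"] gcon_expand[of A v y "midpoint x y"] assms
    unfolding sym_pd_def by (simp add: matrix_vector_mult_scaleR vec.neg)
qed

lemma fobj_along_line:
  assumes "transpose Q = Q"
  shows "fobj Q q (y + s *\<^sub>R d) = fobj Q q y + s * (grad_f Q q y \<bullet> d) + s\<^sup>2 * (d \<bullet> (Q *v d)) / 2"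
  using fobj_expand[OF assms, of q "y + s *\<^sub>R d" y]
  by (simp add: matrix_vector_mult_scaleR power2_eq_square)

lemma gcon_along_line:
  assumes "transpose A = A"
  shows "gcon A v (y + s *\<^sub>R d) = gcon A v y + s * (grad_g A v y \<bullet> d) + s\<^sup>2 * (d \<bullet> (A *v d))"
  using gcon_expand[OF assms, of v "y + s *\<^sub>R d" y]
  by (simp add: matrix_vector_mult_scaleR power2_eq_square)

lemma continuous_on_fobj [continuous_intros]: "continuous_on S (fobj Q q)"
  unfolding fobj_def by (intro continuous_intros)

lemma continuous_on_gcon [continuous_intros]: "continuous_on S (gcon A v)"
  unfolding gcon_def matrix_vector_mult_diff_distrib by (intro continuous_intros)

lemma continuous_on_Jk [continuous_intros]: "continuous_on S (Jk Q q A v m k)"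
  unfolding Jk_def by (intro continuous_intros)

lemma compact_Cset:
  assumes "sym_pd A"
  shows "compact (Cset A v)"
proof -
  obtain c where c: "c > 0" "\<And>x. c * (norm x)\<^sup>2 \<le> x \<bullet> (A *v x)"
    using sym_pd_quadratic_form_ge[OF assms] by blast
  have "Cset A v \<subseteq> cball v (1 / sqrt c)"
  proof
    fix x
    assume "x \<in> Cset A v"
    then have "(norm (x - v))\<^sup>2 \<le> (1 / sqrt c)\<^sup>2"
      using c(1) c(2)[of "x - v"] by (simp add: Cset_def gcon_def field_simps power_divide)
    then show "x \<in> cball v (1 / sqrt c)"
      using c(1) by (simp add: dist_norm norm_minus_commute power2_le_iff_abs_le)
  qed
  moreover have "closed (Cset A v)"
    unfolding Cset_def by (intro closed_Collect_le continuous_intros)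
  ultimately show ?thesis
    by (metis bounded_cball bounded_subset compact_eq_bounded_closed)
qed

lemma center_in_Cset: "v \<in> Cset A v"
  by (simp add: Cset_def gcon_def)

lemma Jk_midpoint_less:
  assumes "sym_psd Q" and "sym_pd A" and "1 \<le> k" and "0 < m" and "x \<noteq> y"
  shows "Jk Q q A v m k (midpoint x y) < (Jk Q q A v m k x + Jk Q q A v m k y) / 2"
proof -
  have g_nonneg: "0 \<le> gcon A v z" for z
    using assms(2) by (simp add: gcon_nonneg sym_pd_imp_sym_psd)
  have "gcon A v (midpoint x y) ^ k < ((gcon A v x + gcon A v y) / 2) ^ k"
    using gcon_midpoint_less[OF assms(2,5)] g_nonneg assms(3) by (intro power_strict_mono) auto
  also have "\<dots> \<le> (gcon A v x ^ k + gcon A v y ^ k) / 2"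
    using g_nonneg g_nonneg by (rule power_midpoint_le)
  finally have "m / real k * gcon A v (midpoint x y) ^ k
      < m / real k * ((gcon A v x ^ k + gcon A v y ^ k) / 2)"
    using assms(3,4) by (intro mult_strict_left_mono) auto
  with fobj_midpoint_le[OF assms(1), of q x y] show ?thesis
    unfolding Jk_def by (simp add: algebra_simps)
qed

lemma Jk_argmin_unique:
  assumes "sym_psd Q" and "sym_pd A" and "1 \<le> k" and "0 < m"
    and "\<forall>z. Jk Q q A v m k x \<le> Jk Q q A v m k z"
    and "\<forall>z. Jk Q q A v m k y \<le> Jk Q q A v m k z"
  shows "x = y"
  using argmin_unique_of_strict_midpoint_convex[of UNIV "Jk Q q A v m k"]
    Jk_midpoint_less[OF assms(1-4)] assms(5,6) by blast

definition grad_Jk ::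
    "real^'n^'n \<Rightarrow> real^'n \<Rightarrow> real^'n^'n \<Rightarrow> real^'n \<Rightarrow> real \<Rightarrow> nat \<Rightarrow> real^'n \<Rightarrow> real^'n" where
  "grad_Jk Q q A v m k x = grad_f Q q x + (m * gcon A v x ^ (k - 1)) *\<^sub>R grad_g A v x"

lemma Jk_above_tangent:
  assumes "sym_psd Q" and "sym_pd A" and "1 \<le> k" and "0 \<le> m"
  shows "Jk Q q A v m k y + grad_Jk Q q A v m k y \<bullet> (x - y) \<le> Jk Q q A v m k x"
proof -
  have A: "sym_psd A"
    using assms(2) by (rule sym_pd_imp_sym_psd)
  let ?gx = "gcon A v x" and ?gy = "gcon A v y" and ?dg = "grad_g A v y \<bullet> (x - y)"
  have f: "fobj Q q y + grad_f Q q y \<bullet> (x - y) \<le> fobj Q q x"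
    using fobj_expand[of Q q x y] assms(1) unfolding sym_psd_def by auto
  have g: "?gy + ?dg \<le> ?gx"
    using gcon_expand[of A v x y] A unfolding sym_psd_def by auto
  have "real k * ?gy ^ (k - 1) * ?dg \<le> real k * ?gy ^ (k - 1) * (?gx - ?gy)"
    using g gcon_nonneg[OF A] by (intro mult_left_mono) auto
  also have "\<dots> \<le> ?gx ^ k - ?gy ^ k"
    using power_above_tangent[of ?gx ?gy k] gcon_nonneg[OF A] by auto
  finally have "m / real k * (real k * ?gy ^ (k - 1) * ?dg) \<le> m / real k * (?gx ^ k - ?gy ^ k)"
    using assms(4) by (intro mult_left_mono) auto
  with f assms(3) show ?thesis
    unfolding Jk_def grad_Jk_def by (simp add: inner_add_left algebra_simps)
qed

lemma Jk_eventually_less_along_descent_direction: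
  assumes "transpose Q = Q" and "transpose A = A" and "1 \<le> k"
    and "grad_Jk Q q A v m k y \<bullet> d < 0"
  shows "\<forall>\<^sub>F s in at_right 0. Jk Q q A v m k (y + s *\<^sub>R d) < Jk Q q A v m k y"
proof -
  have "((\<lambda>s. Jk Q q A v m k (y + s *\<^sub>R d)) has_real_derivative grad_Jk Q q A v m k y \<bullet> d) (at 0)"
    unfolding Jk_def fobj_along_line[OF assms(1)] gcon_along_line[OF assms(2)]
    by (rule derivative_eq_intros refl | simp)+
      (use assms(3) in \<open>simp add: grad_Jk_def inner_add_left\<close>)
  from DERIV_neg_imp_eventually_less[OF this assms(4)] show ?thesis
    by simp
qed

lemma gcon_eventually_le_one_along_direction:
  assumes "transpose A = A" and "gcon A v y \<le> 1"
    and "gcon A v y < 1 \<or> grad_g A v y \<bullet> d < 0"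
  shows "\<forall>\<^sub>F s in at_right 0. gcon A v (y + s *\<^sub>R d) \<le> 1"
  using assms(3)
proof
  assume "gcon A v y < 1"
  have "((\<lambda>s. gcon A v (y + s *\<^sub>R d)) \<longlongrightarrow> gcon A v y) (at_right 0)"
    unfolding gcon_along_line[OF assms(1)] by (rule tendsto_eq_intros refl | simp)+
  from order_tendstoD(2)[OF this \<open>gcon A v y < 1\<close>] show ?thesis
    by (auto elim: eventually_mono)
next
  assume "grad_g A v y \<bullet> d < 0"
  have "((\<lambda>s. gcon A v (y + s *\<^sub>R d)) has_real_derivative grad_g A v y \<bullet> d) (at 0)"
    unfolding gcon_along_line[OF assms(1)] by (rule derivative_eq_intros refl | simp)+
  from DERIV_neg_imp_eventually_less[OF this \<open>grad_g A v y \<bullet> d < 0\<close>] show ?thesis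
    using assms(2) by (auto elim: eventually_mono)
qed

lemma feasible_descent_direction:
  assumes "requirement1 Q q A v m" and "gcon A v y \<le> 1"
    and "grad_Jk Q q A v m k y \<bullet> e < 0"
  obtains d where "grad_Jk Q q A v m k y \<bullet> d < 0" "gcon A v y < 1 \<or> grad_g A v y \<bullet> d < 0"
proof (cases "gcon A v y < 1")
  case True
  then show ?thesis
    using that assms(3) by blast
next
  case False
  then have on_boundary: "gcon A v y = 1"
    using assms(2) by simp
  let ?w = "grad_Jk Q q A v m k y" and ?n = "grad_g A v y"
  have "?n \<noteq> 0"
    using on_boundary by (auto simp: grad_g_def gcon_def)
  then have n_pos: "0 < ?n \<bullet> ?n"
    by simp
  have "0 \<le> ?n \<bullet> ?w"
    using assms(1) on_boundary unfolding requirement1_def grad_Jk_def by simp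
  \<comment> \<open>As \<open>0 \<le> ?n \<bullet> ?w\<close>, tilting e along \<open>-?n\<close> keeps descent; t makes \<open>?n \<bullet> d < 0\<close>.\<close>
  define t where "t = (\<bar>?n \<bullet> e\<bar> + 1) / (?n \<bullet> ?n)"
  have "t \<ge> 0"
    using n_pos by (simp add: t_def)
  have "?w \<bullet> (e - t *\<^sub>R ?n) = ?w \<bullet> e - t * (?n \<bullet> ?w)"
    by (simp add: inner_diff_right inner_commute[of ?w ?n])
  also have "\<dots> < 0"
    using assms(3) mult_nonneg_nonneg[OF \<open>t \<ge> 0\<close> \<open>0 \<le> ?n \<bullet> ?w\<close>] by linarith
  finally have "?w \<bullet> (e - t *\<^sub>R ?n) < 0" .
  moreover have "?n \<bullet> (e - t *\<^sub>R ?n) = ?n \<bullet> e - (\<bar>?n \<bullet> e\<bar> + 1)"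
    using n_pos by (simp add: t_def inner_diff_right)
  then have "?n \<bullet> (e - t *\<^sub>R ?n) < 0"
    by simp
  ultimately show ?thesis
    using that by blast
qed

lemma Jk_argmin_in_Cset:
  assumes hQ: "sym_psd Q" and hA: "sym_pd A" and k: "1 \<le> k" and m: "0 < m"
    and req: "requirement1 Q q A v m"
    and argmin: "\<forall>z. Jk Q q A v m k x \<le> Jk Q q A v m k z"
  shows "x \<in> Cset A v"
proof (rule ccontr)
  assume "x \<notin> Cset A v"
  let ?J = "Jk Q q A v m k"
  obtain y where y: "y \<in> Cset A v" "\<forall>z\<in>Cset A v. ?J y \<le> ?J z"
    using continuous_attains_inf[OF compact_Cset[OF hA] _ continuous_on_Jk] center_in_Cset by blast
  have "?J x < ?J y"
  proof (rule ccontr)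
    assume "\<not> ?J x < ?J y"
    then have "\<forall>z. ?J y \<le> ?J z"
      using argmin by (meson order_trans not_less)
    then show False
      using Jk_argmin_unique[OF hQ hA k m argmin] y(1) \<open>x \<notin> Cset A v\<close> by blast
  qed
  then have "grad_Jk Q q A v m k y \<bullet> (x - y) < 0"
    using Jk_above_tangent[OF hQ hA k, of m q v y x] m by simp
  then obtain d where d: "grad_Jk Q q A v m k y \<bullet> d < 0" "gcon A v y < 1 \<or> grad_g A v y \<bullet> d < 0"
    using feasible_descent_direction[OF req] y(1) unfolding Cset_def by blast
  have "transpose Q = Q" "transpose A = A"
    using hQ hA unfolding sym_psd_def sym_pd_def by auto
  then have "\<forall>\<^sub>F s in at_right 0. ?J (y + s *\<^sub>R d) < ?J y \<and> y + s *\<^sub>R d \<in> Cset A v"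
    using Jk_eventually_less_along_descent_direction[OF _ _ k d(1)]
      gcon_eventually_le_one_along_direction[OF _ _ d(2)] y(1)
    unfolding Cset_def by (auto intro: eventually_conj)
  then obtain s where "?J (y + s *\<^sub>R d) < ?J y" "y + s *\<^sub>R d \<in> Cset A v"
    using eventually_happens' trivial_limit_at_right_real by blast
  then show False
    using y(2) by fastforce
qed

lemma Jk_argmin_bounds:
  assumes hA: "sym_pd A" and k: "1 \<le> k" and m: "0 < m"
    and argmin: "\<forall>y. Jk Q q A v m k x \<le> Jk Q q A v m k y"
    and z: "z \<in> Cset A v"
  shows "fobj Q q z \<le> fobj Q q x \<Longrightarrow> gcon A v x \<le> gcon A v z"
    and "fobj Q q x \<le> fobj Q q z + m / real k"
proof -
  have g_nonneg: "0 \<le> gcon A v y" for y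
    using hA by (simp add: gcon_nonneg sym_pd_imp_sym_psd)
  have "gcon A v z \<le> 1"
    using z unfolding Cset_def by simp
  then have gz: "gcon A v z ^ k \<le> 1"
    using g_nonneg by (rule power_le_one[rotated])
  have mk: "0 < m / real k"
    using m k by simp
  have J: "fobj Q q x + m / real k * gcon A v x ^ k \<le> fobj Q q z + m / real k * gcon A v z ^ k"
    using argmin unfolding Jk_def by blast
  show "gcon A v x \<le> gcon A v z" if "fobj Q q z \<le> fobj Q q x"
  proof -
    have "m / real k * gcon A v x ^ k \<le> m / real k * gcon A v z ^ k"
      using J that by linarith
    then have "gcon A v x ^ k \<le> gcon A v z ^ k"
      using mult_le_cancel_left_pos[OF mk] by blast
    then show ?thesis
      using k power_le_imp_le_base[of "gcon A v x" "k - 1" "gcon A v z"] g_nonneg[of z] by simp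
  qed
  have "m / real k * gcon A v z ^ k \<le> m / real k"
    using mult_left_mono[OF gz, of "m / real k"] mk by simp
  moreover have "0 \<le> m / real k * gcon A v x ^ k"
    using mk g_nonneg by (simp del: times_divide_eq_left)
  ultimately show "fobj Q q x \<le> fobj Q q z + m / real k"
    using J by linarith
qed

lemma Xstar_midpoint:
  assumes "sym_psd Q" and "sym_pd A" and x: "x \<in> Xstar Q q A v" and y: "y \<in> Xstar Q q A v"
  shows "midpoint x y \<in> Xstar Q q A v"
proof (cases "x = y")
  case False
  have "gcon A v (midpoint x y) < (gcon A v x + gcon A v y) / 2"
    using gcon_midpoint_less[OF assms(2) False] .
  also have "\<dots> \<le> 1"
    using x y unfolding Xstar_def Cset_def by simp
  finally have "midpoint x y \<in> Cset A v"
    unfolding Cset_def by simp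
  moreover have "fobj Q q (midpoint x y) \<le> fobj Q q z" if "z \<in> Cset A v" for z
  proof -
    have "fobj Q q (midpoint x y) \<le> (fobj Q q x + fobj Q q y) / 2"
      using fobj_midpoint_le[OF assms(1)] .
    also have "\<dots> \<le> fobj Q q z"
      using x y that add_mono[of "fobj Q q x" "fobj Q q z" "fobj Q q y" "fobj Q q z"]
      unfolding Xstar_def by simp
    finally show ?thesis .
  qed
  ultimately show ?thesis
    unfolding Xstar_def by blast
qed (use x in simp)

lemma Xstar_nonempty:
  assumes "sym_pd A"
  shows "Xstar Q q A v \<noteq> {}"
  using continuous_attains_inf[OF compact_Cset[OF assms] _ continuous_on_fobj] center_in_Cset
  unfolding Xstar_def by blast

lemma compact_Xstar:
  assumes "sym_pd A"
  shows "compact (Xstar Q q A v)"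
proof -
  obtain x where "x \<in> Xstar Q q A v"
    using Xstar_nonempty[OF assms] by blast
  then have "Xstar Q q A v = Cset A v \<inter> {y. fobj Q q y \<le> fobj Q q x}"
    unfolding Xstar_def by (auto intro: order_trans)
  then show ?thesis
    by (simp add: compact_Int_closed compact_Cset[OF assms] closed_Collect_le continuous_on_fobj)
qed

lemma Xstar_least_gcon_exists:
  assumes "sym_pd A"
  obtains x where "x \<in> Xstar Q q A v" "\<forall>y\<in>Xstar Q q A v. gcon A v x \<le> gcon A v y"
  using continuous_attains_inf[OF compact_Xstar[OF assms] Xstar_nonempty[OF assms] continuous_on_gcon]
  by blast

lemma Xstar_least_gcon_unique:
  assumes "sym_psd Q" and "sym_pd A"
    and "x \<in> Xstar Q q A v" "\<forall>z\<in>Xstar Q q A v. gcon A v x \<le> gcon A v z"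
    and "y \<in> Xstar Q q A v" "\<forall>z\<in>Xstar Q q A v. gcon A v y \<le> gcon A v z"
  shows "x = y"
  using argmin_unique_of_strict_midpoint_convex[of "Xstar Q q A v" "gcon A v"]
    Xstar_midpoint[OF assms(1,2)] gcon_midpoint_less[OF assms(2)] assms(3-6) by blast

lemma Jk_argmin_tendsto:
  assumes hQ: "sym_psd Q" and hA: "sym_pd A" and m: "0 < m"
    and req: "requirement1 Q q A v m"
    and argmin: "\<And>k. 1 \<le> k \<Longrightarrow> \<forall>y. Jk Q q A v m k (xk k) \<le> Jk Q q A v m k y"
    and xs: "xs \<in> Xstar Q q A v" "\<forall>y\<in>Xstar Q q A v. gcon A v xs \<le> gcon A v y"
  shows "xk \<longlonglongrightarrow> xs"
proof -
  let ?\<phi> = "\<lambda>x. max (fobj Q q x - fobj Q q xs) (gcon A v x - gcon A v xs)"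
  have feasible: "xk k \<in> Cset A v" if "1 \<le> k" for k
    using Jk_argmin_in_Cset[OF hQ hA that m req argmin[OF that]] .
  have xs_C: "xs \<in> Cset A v" and xs_min: "\<And>z. z \<in> Cset A v \<Longrightarrow> fobj Q q xs \<le> fobj Q q z"
    using xs(1) unfolding Xstar_def by auto
  have \<phi>_xk: "?\<phi> (xk k) \<le> m / real k" if k: "1 \<le> k" for k
    using Jk_argmin_bounds[OF hA k m argmin[OF k] xs_C] xs_min[OF feasible[OF k]] m by simp
  show ?thesis
  proof (rule tendsto_unique_nonpos_point[of "Cset A v" ?\<phi>])
    show "compact (Cset A v)"
      using hA by (rule compact_Cset)
    show "continuous_on (Cset A v) ?\<phi>"
      by (intro continuous_intros)
  next
    fix x
    assume "x \<in> Cset A v" and "?\<phi> x \<le> 0"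
    then have "x \<in> Xstar Q q A v" "\<forall>y\<in>Xstar Q q A v. gcon A v x \<le> gcon A v y"
      using xs xs_min unfolding Xstar_def by (auto intro: order_trans)
    then show "x = xs"
      using Xstar_least_gcon_unique[OF hQ hA _ _ xs] by blast
  next
    show "\<forall>\<^sub>F k in sequentially. xk k \<in> Cset A v"
      using eventually_ge_at_top[of 1] by eventually_elim (rule feasible)
  next
    fix e :: real
    assume "e > 0"
    then have "\<forall>\<^sub>F k in sequentially. m / real k < e"
      using order_tendstoD(2)[OF lim_const_over_n[of m]] by blast
    with eventually_ge_at_top[of 1] show "\<forall>\<^sub>F k in sequentially. ?\<phi> (xk k) < e"
      by eventually_elim (use \<phi>_xk in fastforce)
  qed
qed

theorem proposition1:
  fixes Q A :: "real^'n^'n" and q v :: "real^'n" and m :: real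
    and xk :: "nat \<Rightarrow> real^'n"
  assumes hQ: "sym_psd Q"
    and hA: "sym_pd A"
    and hm: "0 < m"
    and hreq: "requirement1 Q q A v m"
    and hxk: "\<And>k. k \<ge> 1 \<Longrightarrow> \<forall>y. Jk Q q A v m k (xk k) \<le> Jk Q q A v m k y"
  shows "(\<forall>k\<ge>1. \<exists>!x. \<forall>y. Jk Q q A v m k x \<le> Jk Q q A v m k y)
    \<and> (\<forall>k\<ge>1. xk k \<in> Cset A v)
    \<and> (\<exists>xs. (\<forall>z. (z \<in> Xstar Q q A v \<and> (\<forall>y \<in> Xstar Q q A v. gcon A v z \<le> gcon A v y))
                   \<longleftrightarrow> z = xs)
           \<and> xs \<in> Xstar Q q A v
           \<and> xk \<longlonglongrightarrow> xs)"
proof -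
  have "\<exists>!x. \<forall>y. Jk Q q A v m k x \<le> Jk Q q A v m k y" if "1 \<le> k" for k
    using hxk[OF that] Jk_argmin_unique[OF hQ hA that hm] by blast
  moreover have "xk k \<in> Cset A v" if "1 \<le> k" for k
    using Jk_argmin_in_Cset[OF hQ hA that hm hreq hxk[OF that]] .
  moreover obtain xs where xs: "xs \<in> Xstar Q q A v" "\<forall>y\<in>Xstar Q q A v. gcon A v xs \<le> gcon A v y"
    using Xstar_least_gcon_exists[OF hA] by blast
  moreover have "xk \<longlonglongrightarrow> xs"
    using Jk_argmin_tendsto[OF hQ hA hm hreq hxk xs] .
  ultimately show ?thesis
    using Xstar_least_gcon_unique[OF hQ hA _ _ xs] xs by blast
qed

end
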